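(* Let $0<\eta<1$, $\gamma_0=0$ and $\gamma_j=(1+\eta\gamma_{j-1}^2)/2$ for $j\ge1$. Let $I_0=(0,1/4]$, and for $k\ge1$, $I_k=(\alpha_k,\beta_k]$ with $\alpha_k=2\gamma_{k+1}-1$, $\beta_k=\gamma_k^2$; for $j\ge0$ let $J_j=(\gamma_j,\gamma_{j+1}]$. Then there is no pair $(k,j)$ with $J_j\subset I_k$. Consequently each interval $I_k$ meets at most two of the intervals $J_j$.
   Context: Intervals $(a,b]$ are open on the left and closed on the right. *)

theory Defs
  imports Complex_Main
begin

fun gam :: "real \<Rightarrow> nat \<Rightarrow> real" where
  "gam \<eta> 0 = 0"
| "gam \<eta> (Suc j) = (1 + \<eta> * (gam \<eta> j)\<^sup>2) / 2"

definition Iint :: "real \<Rightarrow> nat \<Rightarrow> real set" where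
  "Iint \<eta> k = (if k = 0 then {0<..1/4}
               else {2 * gam \<eta> (k + 1) - 1 <.. (gam \<eta> k)\<^sup>2})"

definition Jint :: "real \<Rightarrow> nat \<Rightarrow> real set" where
  "Jint \<eta> j = {gam \<eta> j <.. gam \<eta> (j + 1)}"

end

theory Submission
  imports Defs
begin

text \<open>
  The endpoints \<open>\<gamma>\<^sub>j\<close> increase strictly, so \<open>J\<^sub>j \<subseteq> I\<^sub>k\<close> forces
  \<open>\<alpha>\<^sub>k \<le> \<gamma>\<^sub>j\<close> and \<open>\<gamma>\<^sub>j\<^sub>+\<^sub>1 \<le> \<beta>\<^sub>k\<close>. For \<open>k = 0\<close> this fails because \<open>\<gamma>\<^sub>j\<^sub>+\<^sub>1 \<ge> 1/2\<close>.
  For \<open>k \<ge> 1\<close> we have \<open>\<alpha>\<^sub>k = \<eta>\<gamma>\<^sub>k\<^sup>2\<close>, so \<open>\<gamma>\<^sub>j \<ge> \<eta>\<gamma>\<^sub>k\<^sup>2\<close> gives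
  \<open>2\<gamma>\<^sub>j\<^sub>+\<^sub>1 = 1 + \<eta>\<gamma>\<^sub>j\<^sup>2 \<ge> 1 + \<eta>\<^sup>3\<gamma>\<^sub>k\<^sup>4\<close>, and an elementary polynomial inequality in
  \<open>y = \<gamma>\<^sub>k \<in> [0,1)\<close>, using only \<open>2y \<le> 1 + \<eta>y\<^sup>2\<close> (that is, \<open>\<gamma>\<^sub>k \<le> \<gamma>\<^sub>k\<^sub>+\<^sub>1\<close>), shows
  \<open>1 + \<eta>\<^sup>3\<gamma>\<^sub>k\<^sup>4 > 2\<gamma>\<^sub>k\<^sup>2 = 2\<beta>\<^sub>k\<close>. Since \<open>I\<^sub>k\<close> is an interval and the \<open>J\<^sub>j\<close> are
  consecutive, meeting \<open>J\<^sub>a\<close> and \<open>J\<^sub>c\<close> with \<open>c \<ge> a + 2\<close> would force \<open>J\<^sub>a\<^sub>+\<^sub>1 \<subseteq> I\<^sub>k\<close>.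
\<close>

lemma gam_nonneg: "0 \<le> \<eta> \<Longrightarrow> 0 \<le> gam \<eta> j"
  by (cases j) auto

lemma gam_Suc_ge_half: "0 \<le> \<eta> \<Longrightarrow> 1/2 \<le> gam \<eta> (Suc j)"
  by simp

lemma gam_less_one:
  assumes "0 \<le> \<eta>" "\<eta> \<le> 1"
  shows "gam \<eta> j < 1"
proof (induction j)
  case (Suc j)
  have "(gam \<eta> j)\<^sup>2 < 1"
    using Suc gam_nonneg[OF assms(1)] by (simp add: abs_square_less_1)
  then have "\<eta> * (gam \<eta> j)\<^sup>2 < 1"
    using mult_left_le_one_le[of "(gam \<eta> j)\<^sup>2" \<eta>] assms by simp
  then show ?case by simp
qed simp

lemma gam_less_gam_Suc:
  assumes "0 < \<eta>"
  shows "gam \<eta> j < gam \<eta> (Suc j)"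
proof (induction j)
  case (Suc j)
  have "(gam \<eta> j)\<^sup>2 < (gam \<eta> (Suc j))\<^sup>2"
    using Suc gam_nonneg assms by (intro power_strict_mono) auto
  then show ?case using assms by simp
qed (simp add: assms)

lemma strict_mono_gam: "0 < \<eta> \<Longrightarrow> strict_mono (gam \<eta>)"
  using gam_less_gam_Suc strict_mono_Suc_iff by blast

lemma Iint_Suc: "Iint \<eta> (Suc k) = {\<eta> * (gam \<eta> (Suc k))\<^sup>2 <.. (gam \<eta> (Suc k))\<^sup>2}"
  by (simp add: Iint_def gam.simps(2)[of \<eta> "Suc k"] add_divide_distrib del: gam.simps)

lemma double_square_less:
  fixes \<eta> y :: real
  assumes "0 \<le> \<eta>" "0 \<le> y" "y < 1" "2 * y \<le> 1 + \<eta> * y\<^sup>2"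
  shows "2 * y\<^sup>2 < 1 + \<eta>^3 * y^4"
proof (cases "2 * y < 1")
  case True
  then have "y\<^sup>2 < (1/2)\<^sup>2"
    using assms(2) by (intro power_strict_mono) auto
  moreover have "0 \<le> \<eta>^3 * y^4" using assms by simp
  ultimately show ?thesis by (simp add: power_divide)
next
  case False
  have "(2 * y - 1)^3 \<le> (\<eta> * y\<^sup>2)^3"
    using False assms(4) by (intro power_mono) auto
  then have cube: "(2 * y - 1)^3 \<le> \<eta>^3 * y^6"
    by (simp add: power_mult_distrib flip: power_mult)
  \<comment> \<open>\<open>4y - 2y\<^sup>2 - 1 = 1 - 2(1 - y)\<^sup>2\<close> is positive because \<open>1 - y \<le> 1/2\<close>.\<close>
  have "(1 - y)\<^sup>2 \<le> (1/2)\<^sup>2"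
    using False assms(3) by (intro power_mono) auto
  then have "0 < 4 * y - 2 * y\<^sup>2 - 1"
    by (simp add: power2_eq_square algebra_simps)
  moreover have "0 < (y - 1)\<^sup>2" using assms(3) by simp
  ultimately have "0 < (y - 1)\<^sup>2 * (4 * y - 2 * y\<^sup>2 - 1)" by simp
  also have "\<dots> = y\<^sup>2 + (2 * y - 1)^3 - 2 * y^4"
    by (simp add: algebra_simps power2_eq_square power3_eq_cube power4_eq_xxxx)
  also have "\<dots> \<le> y\<^sup>2 * (1 + \<eta>^3 * y^4) - y\<^sup>2 * (2 * y\<^sup>2)"
    using cube by (simp add: algebra_simps flip: power_add)
  finally have "y\<^sup>2 * (2 * y\<^sup>2) < y\<^sup>2 * (1 + \<eta>^3 * y^4)" by simp
  then show ?thesis by (simp add: mult_less_cancel_left)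
qed

lemma Jint_not_subset_Iint:
  assumes "0 < \<eta>" "\<eta> < 1"
  shows "\<not> Jint \<eta> j \<subseteq> Iint \<eta> k"
proof
  assume sub: "Jint \<eta> j \<subseteq> Iint \<eta> k"
  have "gam \<eta> j < gam \<eta> (j + 1)" using gam_less_gam_Suc[OF assms(1)] by simp
  then have bounds: "\<And>l u. Iint \<eta> k = {l<..u} \<Longrightarrow> l \<le> gam \<eta> j \<and> gam \<eta> (j + 1) \<le> u"
    using sub unfolding Jint_def by (simp add: Ioc_subset_iff)
  show False
  proof (cases k)
    case 0
    then have "gam \<eta> (Suc j) \<le> 1/4" using bounds[of 0 "1/4"] by (simp add: Iint_def del: gam.simps)
    with gam_Suc_ge_half[of \<eta> j] assms(1) show False by linarith
  next
    case (Suc k')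
    define y where "y = gam \<eta> k"
    have lower: "\<eta> * y\<^sup>2 \<le> gam \<eta> j" and upper: "gam \<eta> (Suc j) \<le> y\<^sup>2"
      using bounds Iint_Suc[of \<eta> k'] unfolding y_def Suc by auto
    have "2 * y\<^sup>2 < 1 + \<eta>^3 * y^4"
    proof (rule double_square_less)
      show "0 \<le> y" "y < 1" unfolding y_def using assms by (auto intro: gam_nonneg gam_less_one)
      show "2 * y \<le> 1 + \<eta> * y\<^sup>2"
        using gam_less_gam_Suc[OF assms(1), of k] unfolding y_def by simp
    qed (use assms in simp)
    also have "\<eta>^3 * y^4 = \<eta> * (\<eta> * y\<^sup>2)\<^sup>2" by algebra
    also have "\<eta> * (\<eta> * y\<^sup>2)\<^sup>2 \<le> \<eta> * (gam \<eta> j)\<^sup>2"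
      using lower assms(1) by (intro mult_left_mono power_mono) auto
    finally have "y\<^sup>2 < gam \<eta> (Suc j)" by simp
    with upper show False by simp
  qed
qed

lemma Ioc_subset_if_between:
  fixes g :: "nat \<Rightarrow> 'a :: linorder"
  assumes "mono g" "a < b" "b < c"
    and "{g a<..g (Suc a)} \<inter> {l<..u} \<noteq> {}" "{g c<..g (Suc c)} \<inter> {l<..u} \<noteq> {}"
  shows "{g b<..g (Suc b)} \<subseteq> {l<..u}"
proof -
  have "g (Suc a) \<le> g b" "g (Suc b) \<le> g c"
    using assms(1-3) by (auto intro: monoD)
  then show ?thesis using assms(4,5) by auto
qed

lemma finite_card_le_2_if_consecutive:
  fixes S :: "nat set"
  assumes "\<And>a c. a \<in> S \<Longrightarrow> c \<in> S \<Longrightarrow> c \<le> Suc a"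
  shows "finite S \<and> card S \<le> 2"
proof (cases "S = {}")
  case False
  define a where "a = (LEAST j. j \<in> S)"
  have "a \<in> S" using False unfolding a_def by (auto intro: LeastI)
  have "S \<subseteq> {a, Suc a}"
  proof
    fix c assume "c \<in> S"
    then have "a \<le> c" "c \<le> Suc a" using \<open>a \<in> S\<close> assms unfolding a_def by (auto intro: Least_le)
    then show "c \<in> {a, Suc a}" by auto
  qed
  then show ?thesis by (auto intro: finite_subset dest: card_mono[rotated])
qed simp

theorem mainTheorem15:
  fixes \<eta> :: real
  assumes "0 < \<eta>" and "\<eta> < 1"
  shows "(\<forall>k j. \<not> (Jint \<eta> j \<subseteq> Iint \<eta> k))
       \<and> (\<forall>k. finite {j. Jint \<eta> j \<inter> Iint \<eta> k \<noteq> {}}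
               \<and> card {j. Jint \<eta> j \<inter> Iint \<eta> k \<noteq> {}} \<le> 2)"
proof (intro conjI allI)
  fix k j
  show "\<not> Jint \<eta> j \<subseteq> Iint \<eta> k" using Jint_not_subset_Iint[OF assms] .
next
  fix k
  obtain l u where I: "Iint \<eta> k = {l<..u}" by (metis Iint_def)
  have "c \<le> Suc a"
    if "Jint \<eta> a \<inter> Iint \<eta> k \<noteq> {}" "Jint \<eta> c \<inter> Iint \<eta> k \<noteq> {}" for a c
  proof (rule ccontr)
    assume "\<not> c \<le> Suc a"
    then have "Jint \<eta> (Suc a) \<subseteq> Iint \<eta> k"
      using that strict_mono_mono[OF strict_mono_gam[OF assms(1)]]
      unfolding I Jint_def Suc_eq_plus1[symmetric] by (intro Ioc_subset_if_between[of "gam \<eta>" a _ c]) auto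
    with Jint_not_subset_Iint[OF assms] show False by blast
  qed
  then show "finite {j. Jint \<eta> j \<inter> Iint \<eta> k \<noteq> {}}"
    and "card {j. Jint \<eta> j \<inter> Iint \<eta> k \<noteq> {}} \<le> 2"
    using finite_card_le_2_if_consecutive[of "{j. Jint \<eta> j \<inter> Iint \<eta> k \<noteq> {}}"] by auto
qed

end
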